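(* Assume $\mathcal{T}$ is a tree, and either (a) $\mu_{ij}=\mu_j$ for all $(i,j)\in\mathcal{E}$ and $\theta_i=0$ for all $i$, or (b) $\mu_{ij}=\mu_i$ for all $(i,j)\in\mathcal{E}$ and $\theta_i=0$ for all $i$. Then there is a constant $m_2$ such that for all measurable locally bounded functions $w_i,y_i$ ($i\in\mathcal{I}$), $z_j$ ($j\in\mathcal{J}$), $\psi_{ij}$ (with $\psi_{ij}=0$ for $i\not\sim j$) on $[0,\infty)$ satisfying $$\sum_{j\in\mathcal{J}}\mathfrak{T}_{\mu_{ij}}\psi_{ij}=w_i-\mathfrak{T}_{\theta_i}y_i\ (i\in\mathcal{I}),\quad \sum_{i\in\mathcal{I}}\psi_{ij}=-z_j\ (j\in\mathcal{J}),\quad y_i\ge0,\ z_j\ge0,\quad \min(e\cdot y(t),e\cdot z(t))=0,$$ we have $\|y(t)\|+\|z(t)\|\le m_2(1+t)^{m_2}\|w\|_t^*$ for all $t\ge0$.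
   Context: $\mathcal{I}=\{1,\dots,I\}$, $\mathcal{J}=\{I+1,\dots,I+J\}$, $\mathcal{E}\subset\mathcal{I}\times\mathcal{J}$, $i\sim j$ iff $(i,j)\in\mathcal{E}$; $\mathcal{T}$ is the bipartite graph with vertices $\mathcal{I}\cup\mathcal{J}$ and edges $\mathcal{E}$. Constants $\mu_{ij}>0$ for $(i,j)\in\mathcal{E}$, $\mu_{ij}=0$ otherwise, $\theta_i\ge0$. $\mathfrak{J}f(t)=\int_0^tf(s)ds$, $\mathfrak{T}_\alpha f=f+\alpha\mathfrak{J}f$. $\|a\|=\sum|a_k|$, $\|w\|_t^*=\sup_{0\le s\le t}\|w(s)\|$, $e=(1,\dots,1)'$. The constant $m_2$ does not depend on $t,w,y,z,\psi$. *)

theory Defs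
  imports "HOL-Analysis.Analysis"
begin

definition Iset :: "nat \<Rightarrow> nat set" where "Iset I = {1..I}"
definition Jset :: "nat \<Rightarrow> nat \<Rightarrow> nat set" where "Jset I J = {I+1..I+J}"

definition adj :: "(nat \<times> nat) set \<Rightarrow> nat \<Rightarrow> nat \<Rightarrow> bool" where
  "adj E u v \<longleftrightarrow> (u, v) \<in> E \<or> (v, u) \<in> E"

definition is_walk :: "(nat \<times> nat) set \<Rightarrow> nat list \<Rightarrow> bool" where
  "is_walk E p \<longleftrightarrow> p \<noteq> [] \<and> (\<forall>k. Suc k < length p \<longrightarrow> adj E (p ! k) (p ! Suc k))"

definition graph_connected :: "nat set \<Rightarrow> (nat \<times> nat) set \<Rightarrow> bool" where
  "graph_connected V E \<longleftrightarrow>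
     (\<forall>u\<in>V. \<forall>v\<in>V. \<exists>p. is_walk E p \<and> set p \<subseteq> V \<and> hd p = u \<and> last p = v)"

definition has_cycle :: "nat set \<Rightarrow> (nat \<times> nat) set \<Rightarrow> bool" where
  "has_cycle V E \<longleftrightarrow>
     (\<exists>p. is_walk E p \<and> set p \<subseteq> V \<and> distinct p \<and> length p \<ge> 3 \<and> adj E (last p) (hd p))"

definition is_tree :: "nat set \<Rightarrow> (nat \<times> nat) set \<Rightarrow> bool" where
  "is_tree V E \<longleftrightarrow> graph_connected V E \<and> \<not> has_cycle V E"

definition Jint :: "(real \<Rightarrow> real) \<Rightarrow> real \<Rightarrow> real" where
  "Jint f t = (LBINT s=0..t. f s)"

definition Top :: "real \<Rightarrow> (real \<Rightarrow> real) \<Rightarrow> real \<Rightarrow> real" where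
  "Top \<alpha> f t = f t + \<alpha> * Jint f t"

definition meas_loc_bdd :: "(real \<Rightarrow> real) \<Rightarrow> bool" where
  "meas_loc_bdd f \<longleftrightarrow> set_borel_measurable borel {0..} f \<and> (\<forall>t\<ge>0. bounded (f ` {0..t}))"

definition supnorm :: "nat set \<Rightarrow> (nat \<Rightarrow> real \<Rightarrow> real) \<Rightarrow> real \<Rightarrow> real" where
  "supnorm A w t = (SUP s\<in>{0..t}. (\<Sum>k\<in>A. \<bar>w k s\<bar>))"

end

theory Submission
  imports Defs
begin

text \<open>Since \<open>\<theta> = 0\<close>, the row equations read \<open>\<Sum>\<^sub>j \<TT>\<^sub>\<mu>\<^sub>i\<^sub>j \<psi>\<^sub>i\<^sub>j = w\<^sub>i - y\<^sub>i\<close>.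
  In case (a), summing them over \<open>i\<close> and using the column equations gives
  \<open>e\<cdot>y - e\<cdot>z - \<Sum>\<^sub>j \<mu>\<^sub>j \<JJ>z\<^sub>j = e\<cdot>w\<close>. The weighted cumulative idleness \<open>\<Sum>\<^sub>j \<mu>\<^sub>j \<JJ>z\<^sub>j\<close> increases only
  while \<open>e\<cdot>z > 0\<close>, hence \<open>e\<cdot>y = 0\<close>, and at such times it is at most \<open>\<parallel>w\<parallel>*\<^sub>t\<close>; so it never exceeds
  \<open>\<parallel>w\<parallel>*\<^sub>t\<close>, and \<open>\<parallel>y\<parallel> + \<parallel>z\<parallel> \<le> 2\<parallel>w\<parallel>*\<^sub>t\<close>.
  In case (b) the cumulative row flows \<open>A\<^sub>i = \<JJ>(\<Sum>\<^sub>j \<psi>\<^sub>i\<^sub>j)\<close> satisfy \<open>A\<^sub>i' + \<mu>\<^sub>i A\<^sub>i = w\<^sub>i - y\<^sub>i\<close>, and the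
  same barrier argument gives \<open>A\<^sub>i \<le> \<parallel>w\<parallel>*\<^sub>t / \<mu>\<^sub>i\<close>. This bounds \<open>e\<cdot>z\<close> by \<open>(1 + I)\<parallel>w\<parallel>*\<^sub>t\<close>, hence the
  cumulative idleness \<open>\<JJ>(e\<cdot>z) = - \<Sum>\<^sub>i A\<^sub>i\<close> linearly in \<open>t\<close>, which bounds every \<open>A\<^sub>i\<close> from below and
  with it \<open>e\<cdot>y\<close>.\<close>

lemma meas_loc_bdd_set_integrable:
  assumes "meas_loc_bdd f"
  shows "set_integrable lborel {0..t} f"
proof (cases "0 \<le> t")
  case True
  have meas: "(\<lambda>x. indicator {0..} x *\<^sub>R f x) \<in> borel_measurable lborel"
    using assms unfolding meas_loc_bdd_def set_borel_measurable_def by simp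
  obtain B where B: "\<And>x. x \<in> {0..t} \<Longrightarrow> norm (f x) \<le> B"
    using assms True unfolding meas_loc_bdd_def bounded_iff by fastforce
  have "integrable lborel (\<lambda>x. indicator {0..t} x *\<^sub>R (indicator {0..} x *\<^sub>R f x))"
    by (rule integrableI_bounded_set_indicator[where B=B])
      (use meas B True in \<open>auto simp: indicator_def emeasure_lborel_Icc\<close>)
  moreover have "(\<lambda>x. indicator {0..t} x *\<^sub>R (indicator {0..} x *\<^sub>R f x))
      = (\<lambda>x. indicator {0..t} x *\<^sub>R f x)"
    by (auto simp: indicator_def fun_eq_iff)
  ultimately show ?thesis
    unfolding set_integrable_def by simp
qed (simp add: set_integrable_def)

lemma meas_loc_bdd_integrable_on:
  assumes "meas_loc_bdd f"
  shows "f integrable_on {0..t}"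
  using set_borel_integral_eq_integral(1)[OF meas_loc_bdd_set_integrable[OF assms]] .

lemma Jint_eq_integral:
  assumes "meas_loc_bdd f" and "0 \<le> t"
  shows "Jint f t = integral {0..t} f"
proof -
  have "Jint f t = (LBINT x=ereal 0..ereal t. f x)"
    by (simp add: Jint_def zero_ereal_def)
  also have "\<dots> = (LBINT x:{0..t}. f x)"
    using assms(2) by (rule interval_integral_Icc)
  also have "\<dots> = integral {0..t} f"
    using set_borel_integral_eq_integral(2)[OF meas_loc_bdd_set_integrable[OF assms(1)]] .
  finally show ?thesis .
qed

lemma Top_zero [simp]: "Top 0 f = f"
  by (simp add: Top_def fun_eq_iff)

text \<open>The last time \<open>u \<le> t\<close> with \<open>\<integral>\<^sub>0\<^sup>u f \<le> M\<close> exists by continuity; after it \<open>f \<le> 0\<close>.\<close>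

lemma indefinite_integral_le_barrier:
  fixes f :: "real \<Rightarrow> real"
  assumes f: "f integrable_on {0..t}" and "0 \<le> t" and "0 \<le> M"
    and barrier: "\<And>s. s \<in> {0..t} \<Longrightarrow> integral {0..s} f > M \<Longrightarrow> f s \<le> 0"
  shows "integral {0..t} f \<le> M"
proof -
  define G where "G s = integral {0..s} f" for s
  define S where "S = {0..t} \<inter> G -` {..M}"
  have "continuous_on {0..t} G"
    unfolding G_def by (rule indefinite_integral_continuous_1[OF f])
  then have "closed S"
    unfolding S_def by (rule continuous_closed_preimage) auto
  moreover have "0 \<in> S" "bdd_above S"
    using assms by (auto simp: S_def G_def intro: bdd_aboveI[where M=t])
  ultimately have "Sup S \<in> S"
    using closed_contains_Sup by blast
  define u where "u = Sup S"
  have u: "0 \<le> u" "u \<le> t" "G u \<le> M"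
    using \<open>Sup S \<in> S\<close> by (auto simp: S_def u_def)
  have above_M: "G s > M" if "s \<in> {u<..t}" for s
  proof (rule ccontr)
    assume "\<not> G s > M"
    with that u have "s \<in> S" by (auto simp: S_def)
    then have "s \<le> u" unfolding u_def using \<open>bdd_above S\<close> by (rule cSup_upper)
    with that show False by simp
  qed
  have "integral {u..t} f = integral {u..t} (\<lambda>s. if s = u then 0 else f s)"
    by (rule integral_spike[where S="{u}"]) auto
  also have "\<dots> \<le> integral {u..t} (\<lambda>s. 0)"
  proof (rule integral_le)
    show "(\<lambda>s. if s = u then 0 else f s) integrable_on {u..t}"
      by (rule integrable_spike[where S="{u}"]) (use integrable_on_subinterval[OF f] u in auto)
    show "(if s = u then 0 else f s) \<le> 0" if "s \<in> {u..t}" for s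
      using that above_M[of s] barrier[of s] u by (auto simp: G_def)
  qed (simp add: integrable_0)
  finally have "integral {u..t} f \<le> 0" by simp
  moreover have "G u + integral {u..t} f = G t"
    unfolding G_def by (rule Henstock_Kurzweil_Integration.integral_combine) (use u f in auto)
  ultimately show ?thesis
    using u by (simp add: G_def)
qed

lemma sum_abs_le_supnorm:
  assumes "finite A" and bounded: "\<And>k. k \<in> A \<Longrightarrow> bounded (w k ` {0..t})" and "s \<in> {0..t}"
  shows "(\<Sum>k\<in>A. \<bar>w k s\<bar>) \<le> supnorm A w t"
proof -
  obtain B where B: "\<And>k x. k \<in> A \<Longrightarrow> x \<in> {0..t} \<Longrightarrow> \<bar>w k x\<bar> \<le> B k"
    using bounded unfolding bounded_iff real_norm_def by (metis imageI)
  have "bdd_above ((\<lambda>s. \<Sum>k\<in>A. \<bar>w k s\<bar>) ` {0..t})"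
    by (rule bdd_aboveI[where M="\<Sum>k\<in>A. B k"]) (auto intro!: sum_mono B)
  then show ?thesis
    unfolding supnorm_def using \<open>s \<in> {0..t}\<close> by (rule cSUP_upper2) simp
qed

lemma abs_sum_le_supnorm:
  assumes "finite A" and "\<And>k. k \<in> A \<Longrightarrow> bounded (w k ` {0..t})" and "s \<in> {0..t}"
  shows "\<bar>\<Sum>k\<in>A. w k s\<bar> \<le> supnorm A w t"
  using sum_abs[of "\<lambda>k. w k s" A] sum_abs_le_supnorm[where w=w, OF assms] by linarith

lemma abs_le_supnorm:
  assumes "finite A" and "\<And>k. k \<in> A \<Longrightarrow> bounded (w k ` {0..t})" and "s \<in> {0..t}"
    and "k \<in> A"
  shows "\<bar>w k s\<bar> \<le> supnorm A w t"
  using member_le_sum[of k A "\<lambda>k. \<bar>w k s\<bar>"] sum_abs_le_supnorm[where w=w, OF assms(1-3)] assms(1,4)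
  by simp

lemma supnorm_nonneg:
  assumes "finite A" and "\<And>k. k \<in> A \<Longrightarrow> bounded (w k ` {0..t})" and "0 \<le> t"
  shows "0 \<le> supnorm A w t"
proof -
  have "(\<Sum>k\<in>A. \<bar>w k 0\<bar>) \<le> supnorm A w t"
    by (rule sum_abs_le_supnorm) (use assms in auto)
  then show ?thesis
    by (meson order_trans sum_nonneg abs_ge_zero)
qed

lemma finite_Iset [simp]: "finite (Iset I)"
  and finite_Jset [simp]: "finite (Jset I J)"
  and card_Iset [simp]: "card (Iset I) = I"
  by (simp_all add: Iset_def Jset_def)

text \<open>The relations of the theorem with \<open>\<theta> = 0\<close>, in which case \<open>\<TT>\<^sub>\<theta> y = y\<close>.\<close>

locale complementarity_system =
  fixes I J :: nat and E :: "(nat \<times> nat) set" and \<mu> :: "nat \<Rightarrow> nat \<Rightarrow> real"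
    and w y z :: "nat \<Rightarrow> real \<Rightarrow> real" and \<psi> :: "nat \<Rightarrow> nat \<Rightarrow> real \<Rightarrow> real"
  assumes w_meas: "i \<in> Iset I \<Longrightarrow> meas_loc_bdd (w i)"
    and z_meas: "j \<in> Jset I J \<Longrightarrow> meas_loc_bdd (z j)"
    and psi_meas: "i \<in> Iset I \<Longrightarrow> j \<in> Jset I J \<Longrightarrow> meas_loc_bdd (\<psi> i j)"
    and psi_off_edges: "i \<in> Iset I \<Longrightarrow> j \<in> Jset I J \<Longrightarrow> (i, j) \<notin> E \<Longrightarrow> 0 \<le> s \<Longrightarrow> \<psi> i j s = 0"
    and row_eq: "i \<in> Iset I \<Longrightarrow> 0 \<le> t \<Longrightarrow>
      (\<Sum>j\<in>Jset I J. Top (\<mu> i j) (\<psi> i j) t) = w i t - y i t"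
    and column_eq: "j \<in> Jset I J \<Longrightarrow> 0 \<le> t \<Longrightarrow> (\<Sum>i\<in>Iset I. \<psi> i j t) = - z j t"
    and y_nonneg: "i \<in> Iset I \<Longrightarrow> 0 \<le> t \<Longrightarrow> 0 \<le> y i t"
    and z_nonneg: "j \<in> Jset I J \<Longrightarrow> 0 \<le> t \<Longrightarrow> 0 \<le> z j t"
    and complementarity: "0 \<le> t \<Longrightarrow> (\<Sum>i\<in>Iset I. y i t) = 0 \<or> (\<Sum>j\<in>Jset I J. z j t) = 0"
begin

lemma psi_integrable: "i \<in> Iset I \<Longrightarrow> j \<in> Jset I J \<Longrightarrow> \<psi> i j integrable_on {0..s}"
  by (simp add: meas_loc_bdd_integrable_on psi_meas)

lemma z_integrable: "j \<in> Jset I J \<Longrightarrow> z j integrable_on {0..s}"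
  by (simp add: meas_loc_bdd_integrable_on z_meas)

lemma w_bounded: "i \<in> Iset I \<Longrightarrow> bounded (w i ` {0..t})"
  using w_meas by (cases "0 \<le> t") (auto simp: meas_loc_bdd_def)

lemma abs_sum_w_le: "s \<in> {0..t} \<Longrightarrow> \<bar>\<Sum>i\<in>Iset I. w i s\<bar> \<le> supnorm (Iset I) w t"
  by (rule abs_sum_le_supnorm) (auto intro: w_bounded)

lemma abs_w_le: "i \<in> Iset I \<Longrightarrow> s \<in> {0..t} \<Longrightarrow> \<bar>w i s\<bar> \<le> supnorm (Iset I) w t"
  by (rule abs_le_supnorm) (auto intro: w_bounded)

lemma supnorm_w_nonneg: "0 \<le> t \<Longrightarrow> 0 \<le> supnorm (Iset I) w t"
  by (rule supnorm_nonneg) (auto intro: w_bounded)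

lemma sum_abs_y: "0 \<le> t \<Longrightarrow> (\<Sum>i\<in>Iset I. \<bar>y i t\<bar>) = (\<Sum>i\<in>Iset I. y i t)"
  by (simp add: y_nonneg)

lemma sum_abs_z: "0 \<le> t \<Longrightarrow> (\<Sum>j\<in>Jset I J. \<bar>z j t\<bar>) = (\<Sum>j\<in>Jset I J. z j t)"
  by (simp add: z_nonneg)

lemma y_vanishes:
  assumes "0 \<le> t" and "(\<Sum>j\<in>Jset I J. z j t) \<noteq> 0" and "i \<in> Iset I"
  shows "y i t = 0"
  using complementarity[OF assms(1)] assms sum_nonneg_eq_0_iff[of "Iset I" "\<lambda>i. y i t"]
  by (simp add: y_nonneg)

lemma z_vanishes:
  assumes "0 \<le> t" and "(\<Sum>j\<in>Jset I J. z j t) = 0" and "j \<in> Jset I J"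
  shows "z j t = 0"
  using assms sum_nonneg_eq_0_iff[of "Jset I J" "\<lambda>j. z j t"] by (simp add: z_nonneg)

text \<open>Off the edges \<open>\<psi>\<^sub>i\<^sub>j = 0\<close>, so only the rates on the edges matter.\<close>

lemma row_eq_integral:
  assumes "i \<in> Iset I" and "0 \<le> s" and rate: "\<And>j. (i, j) \<in> E \<Longrightarrow> \<mu> i j = r j"
  shows "(\<Sum>j\<in>Jset I J. \<psi> i j s + r j * integral {0..s} (\<psi> i j)) = w i s - y i s"
proof -
  have "\<psi> i j s + r j * integral {0..s} (\<psi> i j) = Top (\<mu> i j) (\<psi> i j) s"
    if j: "j \<in> Jset I J" for j
  proof (cases "(i, j) \<in> E")
    case False
    then have "integral {0..s} (\<psi> i j) = integral {0..s} (\<lambda>_. 0)"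
      using assms(1) j by (intro integral_cong) (auto intro: psi_off_edges)
    with False show ?thesis
      using assms(1,2) j by (simp add: Top_def Jint_eq_integral psi_meas psi_off_edges)
  qed (use assms j in \<open>simp add: Top_def Jint_eq_integral psi_meas\<close>)
  then show ?thesis
    using row_eq[OF assms(1,2)] by simp
qed

lemma column_eq_integral:
  assumes "j \<in> Jset I J" and "0 \<le> s"
  shows "(\<Sum>i\<in>Iset I. integral {0..s} (\<psi> i j)) = - integral {0..s} (z j)"
proof -
  have "(\<Sum>i\<in>Iset I. integral {0..s} (\<psi> i j)) = integral {0..s} (\<lambda>r. \<Sum>i\<in>Iset I. \<psi> i j r)"
    by (rule integral_sum[symmetric]) (use assms psi_integrable in auto)
  also have "\<dots> = integral {0..s} (\<lambda>r. - z j r)"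
    using assms by (intro integral_cong) (simp add: column_eq)
  finally show ?thesis
    by (simp add: integral_neg)
qed

definition row_flow :: "nat \<Rightarrow> real \<Rightarrow> real" where
  "row_flow i r = (\<Sum>j\<in>Jset I J. \<psi> i j r)"

lemma row_flow_integrable: "i \<in> Iset I \<Longrightarrow> row_flow i integrable_on {0..s}"
  unfolding row_flow_def by (intro integrable_sum psi_integrable) simp_all

lemma sum_row_flow:
  assumes "0 \<le> s"
  shows "(\<Sum>i\<in>Iset I. row_flow i s) = - (\<Sum>j\<in>Jset I J. z j s)"
proof -
  have "(\<Sum>i\<in>Iset I. row_flow i s) = (\<Sum>j\<in>Jset I J. \<Sum>i\<in>Iset I. \<psi> i j s)"
    unfolding row_flow_def by (rule sum.swap)
  also have "\<dots> = (\<Sum>j\<in>Jset I J. - z j s)"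
    using assms by (intro sum.cong) (simp_all add: column_eq)
  finally show ?thesis
    by (simp add: sum_negf)
qed

lemma sum_row_flow_integral:
  assumes "0 \<le> s"
  shows "(\<Sum>i\<in>Iset I. integral {0..s} (row_flow i)) = - integral {0..s} (\<lambda>r. \<Sum>j\<in>Jset I J. z j r)"
proof -
  have "(\<Sum>i\<in>Iset I. integral {0..s} (row_flow i)) = integral {0..s} (\<lambda>r. \<Sum>i\<in>Iset I. row_flow i r)"
    by (simp add: integral_sum row_flow_integrable)
  also have "\<dots> = integral {0..s} (\<lambda>r. - (\<Sum>j\<in>Jset I J. z j r))"
    by (intro integral_cong) (simp add: sum_row_flow)
  finally show ?thesis
    by simp
qed

lemma idleness_integrable: "(\<lambda>r. \<Sum>j\<in>Jset I J. z j r) integrable_on {0..s}"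
  by (intro integrable_sum z_integrable) simp_all

context
  fixes \<nu> :: "nat \<Rightarrow> real"
  assumes server_rate: "\<And>i j. (i, j) \<in> E \<Longrightarrow> \<mu> i j = \<nu> j"
    and server_rate_nonneg: "\<And>j. 0 \<le> \<nu> j"
begin

lemma weighted_idleness_integrable:
  "(\<lambda>r. \<Sum>j\<in>Jset I J. \<nu> j * z j r) integrable_on {0..s}"
  by (intro integrable_sum integrable_on_mult_right z_integrable) simp_all

lemma total_balance_server_rates:
  assumes "0 \<le> s"
  shows "(\<Sum>i\<in>Iset I. y i s) - (\<Sum>j\<in>Jset I J. z j s)
           - integral {0..s} (\<lambda>r. \<Sum>j\<in>Jset I J. \<nu> j * z j r) = (\<Sum>i\<in>Iset I. w i s)"
proof -
  have "(\<Sum>i\<in>Iset I. w i s - y i s)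
      = (\<Sum>i\<in>Iset I. \<Sum>j\<in>Jset I J. \<psi> i j s + \<nu> j * integral {0..s} (\<psi> i j))"
    using row_eq_integral[OF _ assms server_rate] by simp
  also have "\<dots> = (\<Sum>j\<in>Jset I J.
      (\<Sum>i\<in>Iset I. \<psi> i j s) + \<nu> j * (\<Sum>i\<in>Iset I. integral {0..s} (\<psi> i j)))"
    by (subst sum.swap) (simp add: sum.distrib sum_distrib_left)
  also have "\<dots> = (\<Sum>j\<in>Jset I J. - z j s - \<nu> j * integral {0..s} (z j))"
    using assms by (intro sum.cong) (simp_all add: column_eq column_eq_integral)
  also have "\<dots> = - (\<Sum>j\<in>Jset I J. z j s) - integral {0..s} (\<lambda>r. \<Sum>j\<in>Jset I J. \<nu> j * z j r)"
    by (simp add: integral_sum integrable_on_mult_right z_integrable sum_subtractf sum_negf)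
  finally show ?thesis
    by (simp add: sum_subtractf)
qed

lemma weighted_idleness_le:
  assumes "0 \<le> t"
  shows "integral {0..t} (\<lambda>r. \<Sum>j\<in>Jset I J. \<nu> j * z j r) \<le> supnorm (Iset I) w t"
proof (rule indefinite_integral_le_barrier[OF weighted_idleness_integrable assms supnorm_w_nonneg[OF assms]])
  fix s assume s: "s \<in> {0..t}"
    and above: "integral {0..s} (\<lambda>r. \<Sum>j\<in>Jset I J. \<nu> j * z j r) > supnorm (Iset I) w t"
  show "(\<Sum>j\<in>Jset I J. \<nu> j * z j s) \<le> 0"
  proof (cases "(\<Sum>j\<in>Jset I J. z j s) = 0")
    case True
    then show ?thesis
      using s by (simp add: z_vanishes)
  next
    case False
    then have "(\<Sum>i\<in>Iset I. y i s) = 0"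
      using s complementarity by auto
    moreover have "0 \<le> (\<Sum>j\<in>Jset I J. z j s)"
      using s by (simp add: sum_nonneg z_nonneg)
    ultimately show ?thesis
      using total_balance_server_rates[of s] abs_sum_w_le[OF s] above s by auto
  qed
qed

lemma norm_bound_server_rates:
  assumes "0 \<le> t"
  shows "(\<Sum>i\<in>Iset I. \<bar>y i t\<bar>) + (\<Sum>j\<in>Jset I J. \<bar>z j t\<bar>) \<le> 2 * supnorm (Iset I) w t"
proof -
  have "0 \<le> integral {0..t} (\<lambda>r. \<Sum>j\<in>Jset I J. \<nu> j * z j r)"
    by (intro integral_nonneg weighted_idleness_integrable sum_nonneg mult_nonneg_nonneg
        server_rate_nonneg z_nonneg) auto
  moreover have "0 \<le> (\<Sum>i\<in>Iset I. y i t)" "0 \<le> (\<Sum>j\<in>Jset I J. z j t)"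
    using assms by (simp_all add: sum_nonneg y_nonneg z_nonneg)
  ultimately show ?thesis
    using complementarity[OF assms] total_balance_server_rates[OF assms]
      weighted_idleness_le[OF assms] abs_sum_w_le[of t t] assms
    by (auto simp: sum_abs_y sum_abs_z)
qed

end

context
  fixes \<nu> :: "nat \<Rightarrow> real"
  assumes class_rate: "\<And>i j. (i, j) \<in> E \<Longrightarrow> \<mu> i j = \<nu> i"
    and class_rate_pos: "\<And>i. i \<in> Iset I \<Longrightarrow> 0 < \<nu> i"
begin

lemma row_balance_class_rates:
  assumes "i \<in> Iset I" and "0 \<le> s"
  shows "row_flow i s + \<nu> i * integral {0..s} (row_flow i) = w i s - y i s"
proof -
  have "integral {0..s} (row_flow i) = (\<Sum>j\<in>Jset I J. integral {0..s} (\<psi> i j))"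
    unfolding row_flow_def using assms(1) by (simp add: integral_sum psi_integrable)
  then show ?thesis
    using row_eq_integral[OF assms, of "\<lambda>_. \<nu> i"] class_rate
    by (simp add: row_flow_def sum.distrib sum_distrib_left)
qed

lemma row_flow_integral_le:
  assumes "i \<in> Iset I" and "s \<in> {0..t}"
  shows "integral {0..s} (row_flow i) \<le> supnorm (Iset I) w t / \<nu> i"
proof (rule indefinite_integral_le_barrier[OF row_flow_integrable[OF assms(1)]])
  show "0 \<le> s" "0 \<le> supnorm (Iset I) w t / \<nu> i"
    using assms supnorm_w_nonneg[of t] class_rate_pos[of i] by auto
  fix r assume r: "r \<in> {0..s}" and above: "integral {0..r} (row_flow i) > supnorm (Iset I) w t / \<nu> i"
  then have "supnorm (Iset I) w t < \<nu> i * integral {0..r} (row_flow i)"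
    using class_rate_pos[OF assms(1)] by (simp add: pos_divide_less_eq mult.commute)
  moreover have "\<bar>w i r\<bar> \<le> supnorm (Iset I) w t"
    using abs_w_le[OF assms(1)] r assms(2) by auto
  ultimately show "row_flow i r \<le> 0"
    using row_balance_class_rates[OF assms(1), of r] y_nonneg[OF assms(1), of r] r by auto
qed

lemma idleness_le:
  assumes "s \<in> {0..t}"
  shows "(\<Sum>j\<in>Jset I J. z j s) \<le> (1 + real I) * supnorm (Iset I) w t"
proof (cases "(\<Sum>j\<in>Jset I J. z j s) = 0")
  case True
  then show ?thesis
    using assms supnorm_w_nonneg[of t] by simp
next
  case False
  have "- (\<Sum>j\<in>Jset I J. z j s) = (\<Sum>i\<in>Iset I. row_flow i s)"
    using assms by (simp add: sum_row_flow)
  also have "\<dots> = (\<Sum>i\<in>Iset I. w i s - \<nu> i * integral {0..s} (row_flow i))"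
  proof (rule sum.cong)
    fix i assume "i \<in> Iset I"
    then show "row_flow i s = w i s - \<nu> i * integral {0..s} (row_flow i)"
      using row_balance_class_rates[of i s] y_vanishes[of s i] assms False by auto
  qed simp
  also have "\<dots> \<ge> (\<Sum>i\<in>Iset I. w i s) - (\<Sum>i\<in>Iset I. supnorm (Iset I) w t)"
    unfolding sum_subtractf
    using row_flow_integral_le assms class_rate_pos
    by (intro diff_left_mono sum_mono) (simp add: field_simps)
  finally show ?thesis
    using abs_sum_w_le[OF assms] by (simp add: algebra_simps)
qed

lemma idleness_integral_le:
  assumes "0 \<le> t"
  shows "integral {0..t} (\<lambda>r. \<Sum>j\<in>Jset I J. z j r) \<le> (1 + real I) * supnorm (Iset I) w t * t"
proof -
  have "integral {0..t} (\<lambda>r. \<Sum>j\<in>Jset I J. z j r) \<le> integral {0..t} (\<lambda>r. (1 + real I) * supnorm (Iset I) w t)"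
    by (intro integral_le idleness_integrable idleness_le) auto
  then show ?thesis
    using assms by (simp add: mult_ac)
qed

text \<open>The other cumulative row flows are bounded above, and all of them sum to minus the
  cumulative idleness.\<close>

lemma row_flow_integral_ge:
  assumes "i \<in> Iset I" and "0 \<le> t"
  shows "- integral {0..t} (\<lambda>r. \<Sum>j\<in>Jset I J. z j r) - supnorm (Iset I) w t * (\<Sum>k\<in>Iset I. 1 / \<nu> k)
    \<le> integral {0..t} (row_flow i)"
proof -
  let ?A = "\<lambda>k. integral {0..t} (row_flow k)" and ?W = "supnorm (Iset I) w t"
  have "- integral {0..t} (\<lambda>r. \<Sum>j\<in>Jset I J. z j r) = ?A i + (\<Sum>k\<in>Iset I - {i}. ?A k)"
    using sum_row_flow_integral[OF assms(2)] sum.remove[OF finite_Iset assms(1), of ?A] by simp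
  also have "\<dots> \<le> ?A i + (\<Sum>k\<in>Iset I - {i}. ?W / \<nu> k)"
    using row_flow_integral_le assms by (intro add_left_mono sum_mono) auto
  also have "\<dots> \<le> ?A i + (\<Sum>k\<in>Iset I. ?W / \<nu> k)"
    using supnorm_w_nonneg[OF assms(2)] class_rate_pos
    by (intro add_left_mono sum_mono2) (auto intro: divide_nonneg_pos)
  finally show ?thesis
    by (simp add: sum_distrib_left)
qed

lemma weighted_row_flow_integral_ge:
  assumes "0 \<le> t"
  shows "- ((\<Sum>i\<in>Iset I. \<nu> i)
      * ((1 + real I) * supnorm (Iset I) w t * t + supnorm (Iset I) w t * (\<Sum>i\<in>Iset I. 1 / \<nu> i)))
    \<le> (\<Sum>i\<in>Iset I. \<nu> i * integral {0..t} (row_flow i))"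
proof -
  define X where "X = (1 + real I) * supnorm (Iset I) w t * t
    + supnorm (Iset I) w t * (\<Sum>i\<in>Iset I. 1 / \<nu> i)"
  have "(\<Sum>i\<in>Iset I. \<nu> i * - X) \<le> (\<Sum>i\<in>Iset I. \<nu> i * integral {0..t} (row_flow i))"
    using row_flow_integral_ge idleness_integral_le[OF assms] class_rate_pos assms
    by (intro sum_mono mult_left_mono) (force simp: X_def)+
  then show ?thesis
    by (simp add: sum_distrib_right sum_negf flip: X_def)
qed

lemma total_work_le_class_rates:
  assumes "0 \<le> t" and "(\<Sum>j\<in>Jset I J. z j t) = 0"
  shows "(\<Sum>i\<in>Iset I. y i t) \<le> supnorm (Iset I) w t + (\<Sum>i\<in>Iset I. \<nu> i)
      * ((1 + real I) * supnorm (Iset I) w t * t + supnorm (Iset I) w t * (\<Sum>i\<in>Iset I. 1 / \<nu> i))"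
proof -
  have "(\<Sum>i\<in>Iset I. y i t)
      = (\<Sum>i\<in>Iset I. w i t - row_flow i t - \<nu> i * integral {0..t} (row_flow i))"
  proof (rule sum.cong)
    fix i assume "i \<in> Iset I"
    then show "y i t = w i t - row_flow i t - \<nu> i * integral {0..t} (row_flow i)"
      using row_balance_class_rates[of i t] assms by simp
  qed simp
  also have "\<dots> = (\<Sum>i\<in>Iset I. w i t) - (\<Sum>i\<in>Iset I. row_flow i t)
      - (\<Sum>i\<in>Iset I. \<nu> i * integral {0..t} (row_flow i))"
    by (simp add: sum_subtractf)
  finally show ?thesis
    using weighted_row_flow_integral_ge[OF assms(1)] sum_row_flow[OF assms(1)] assms(2)
      abs_sum_w_le[of t t] assms(1)
    by (simp add: algebra_simps)
qed

lemma norm_bound_class_rates: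
  assumes "0 \<le> t"
  shows "(\<Sum>i\<in>Iset I. \<bar>y i t\<bar>) + (\<Sum>j\<in>Jset I J. \<bar>z j t\<bar>)
    \<le> ((1 + real I) * (1 + (\<Sum>i\<in>Iset I. \<nu> i)) + (\<Sum>i\<in>Iset I. \<nu> i) * (\<Sum>i\<in>Iset I. 1 / \<nu> i))
      * (1 + t) * supnorm (Iset I) w t"
    (is "_ \<le> ?K * (1 + t) * ?W")
proof -
  define N P c where "N = (\<Sum>i\<in>Iset I. \<nu> i)" and "P = (\<Sum>i\<in>Iset I. 1 / \<nu> i)"
    and "c = 1 + real I"
  have "0 \<le> N" "0 \<le> P"
    unfolding N_def P_def using class_rate_pos by (simp_all add: sum_nonneg less_imp_le)
  moreover have "1 \<le> c" "0 \<le> ?W"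
    using assms supnorm_w_nonneg by (simp_all add: c_def)
  ultimately have "c \<le> ?K * (1 + t)" "1 + N * P + N * c * t \<le> ?K * (1 + t)"
    using assms by (auto simp: N_def P_def c_def algebra_simps intro!: mult_right_mono add_increasing)
  consider "(\<Sum>i\<in>Iset I. y i t) = 0" | "(\<Sum>j\<in>Jset I J. z j t) = 0"
    using complementarity[OF assms] by blast
  then show ?thesis
  proof cases
    case 1
    then have "(\<Sum>i\<in>Iset I. \<bar>y i t\<bar>) + (\<Sum>j\<in>Jset I J. \<bar>z j t\<bar>) \<le> c * ?W"
      using idleness_le[of t t] assms by (simp add: sum_abs_y sum_abs_z c_def)
    also have "\<dots> \<le> ?K * (1 + t) * ?W"
      using \<open>c \<le> ?K * (1 + t)\<close> \<open>0 \<le> ?W\<close> by (rule mult_right_mono)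
    finally show ?thesis .
  next
    case 2
    then have "(\<Sum>i\<in>Iset I. \<bar>y i t\<bar>) + (\<Sum>j\<in>Jset I J. \<bar>z j t\<bar>) \<le> (1 + N * P + N * c * t) * ?W"
      using total_work_le_class_rates[OF assms 2] assms
      by (simp add: sum_abs_y sum_abs_z N_def P_def c_def algebra_simps)
    also have "\<dots> \<le> ?K * (1 + t) * ?W"
      using \<open>1 + N * P + N * c * t \<le> ?K * (1 + t)\<close> \<open>0 \<le> ?W\<close> by (rule mult_right_mono)
    finally show ?thesis .
  qed
qed

end

end

lemma one_plus_le_powr:
  fixes t K :: real
  assumes "0 \<le> t" and "1 \<le> K"
  shows "1 + t \<le> (1 + t) powr K"
  using powr_mono[of 1 K "1 + t"] assms by simp

lemma complementarity_system_linear_bound: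
  assumes mu_pos: "\<And>i j. (i, j) \<in> E \<Longrightarrow> 0 < \<mu> i j"
    and rates: "(\<exists>m. \<forall>(i, j)\<in>E. \<mu> i j = m j) \<or> (\<exists>m. \<forall>(i, j)\<in>E. \<mu> i j = m i)"
  obtains K :: real where "1 \<le> K"
    and "\<And>w y z \<psi> t. complementarity_system I J E \<mu> w y z \<psi> \<Longrightarrow> 0 \<le> t \<Longrightarrow>
      (\<Sum>i\<in>Iset I. \<bar>y i t\<bar>) + (\<Sum>j\<in>Jset I J. \<bar>z j t\<bar>) \<le> K * (1 + t) * supnorm (Iset I) w t"
  using rates
proof (elim disjE exE)
  fix m assume m: "\<forall>(i, j)\<in>E. \<mu> i j = m j"
  define \<nu> where "\<nu> j = (if 0 < m j then m j else 1)" for j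
  have rate: "\<mu> i j = \<nu> j" if "(i, j) \<in> E" for i j
    using m mu_pos[OF that] that by (auto simp: \<nu>_def)
  have rate_nonneg: "0 \<le> \<nu> j" for j
    by (simp add: \<nu>_def)
  show thesis
  proof (rule that[of 2])
    fix w y z \<psi> and t :: real
    assume system: "complementarity_system I J E \<mu> w y z \<psi>" and t: "0 \<le> t"
    have "(\<Sum>i\<in>Iset I. \<bar>y i t\<bar>) + (\<Sum>j\<in>Jset I J. \<bar>z j t\<bar>) \<le> 2 * supnorm (Iset I) w t"
      using complementarity_system.norm_bound_server_rates[OF system rate rate_nonneg t] .
    also have "\<dots> \<le> 2 * (1 + t) * supnorm (Iset I) w t"
      using mult_nonneg_nonneg[OF t complementarity_system.supnorm_w_nonneg[OF system t]]
      by (simp add: algebra_simps)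
    finally show "(\<Sum>i\<in>Iset I. \<bar>y i t\<bar>) + (\<Sum>j\<in>Jset I J. \<bar>z j t\<bar>)
      \<le> 2 * (1 + t) * supnorm (Iset I) w t" .
  qed simp
next
  fix m assume m: "\<forall>(i, j)\<in>E. \<mu> i j = m i"
  define \<nu> where "\<nu> i = (if 0 < m i then m i else 1)" for i
  have rate: "\<mu> i j = \<nu> i" if "(i, j) \<in> E" for i j
    using m mu_pos[OF that] that by (auto simp: \<nu>_def)
  have rate_pos: "0 < \<nu> i" for i
    by (simp add: \<nu>_def)
  have "0 \<le> (\<Sum>i\<in>Iset I. \<nu> i)" "0 \<le> (\<Sum>i\<in>Iset I. 1 / \<nu> i)"
    using rate_pos by (simp_all add: sum_nonneg less_imp_le)
  then have "1 \<le> (1 + real I) * (1 + (\<Sum>i\<in>Iset I. \<nu> i)) + (\<Sum>i\<in>Iset I. \<nu> i) * (\<Sum>i\<in>Iset I. 1 / \<nu> i)"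
    by (simp add: algebra_simps)
  then show thesis
    using complementarity_system.norm_bound_class_rates[of I J E \<mu> _ _ _ _ \<nu>, OF _ rate rate_pos]
    by (rule that)
qed

theorem proposition2:
  fixes I J :: nat
    and E :: "(nat \<times> nat) set"
    and \<mu> :: "nat \<Rightarrow> nat \<Rightarrow> real"
    and \<theta> :: "nat \<Rightarrow> real"
  assumes E_sub: "E \<subseteq> Iset I \<times> Jset I J"
    and mu_pos: "\<And>i j. (i, j) \<in> E \<Longrightarrow> \<mu> i j > 0"
    and mu_zero: "\<And>i j. (i, j) \<notin> E \<Longrightarrow> \<mu> i j = 0"
    and theta_nonneg: "\<And>i. \<theta> i \<ge> 0"
    and tree: "is_tree (Iset I \<union> Jset I J) E"
    and cases: "((\<exists>m :: nat \<Rightarrow> real. \<forall>(i, j)\<in>E. \<mu> i j = m j) \<and> (\<forall>i\<in>Iset I. \<theta> i = 0))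
              \<or> ((\<exists>m :: nat \<Rightarrow> real. \<forall>(i, j)\<in>E. \<mu> i j = m i) \<and> (\<forall>i\<in>Iset I. \<theta> i = 0))"
  shows "\<exists>m2 :: real. \<forall>(w :: nat \<Rightarrow> real \<Rightarrow> real) (y :: nat \<Rightarrow> real \<Rightarrow> real)
            (z :: nat \<Rightarrow> real \<Rightarrow> real) (\<psi> :: nat \<Rightarrow> nat \<Rightarrow> real \<Rightarrow> real).
           (\<forall>i\<in>Iset I. meas_loc_bdd (w i) \<and> meas_loc_bdd (y i))
         \<and> (\<forall>j\<in>Jset I J. meas_loc_bdd (z j))
         \<and> (\<forall>i\<in>Iset I. \<forall>j\<in>Jset I J. meas_loc_bdd (\<psi> i j))
         \<and> (\<forall>i\<in>Iset I. \<forall>j\<in>Jset I J. (i, j) \<notin> E \<longrightarrow> (\<forall>s\<ge>0. \<psi> i j s = 0))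
         \<and> (\<forall>i\<in>Iset I. \<forall>t\<ge>0.
              (\<Sum>j\<in>Jset I J. Top (\<mu> i j) (\<psi> i j) t) = w i t - Top (\<theta> i) (y i) t)
         \<and> (\<forall>j\<in>Jset I J. \<forall>t\<ge>0. (\<Sum>i\<in>Iset I. \<psi> i j t) = - z j t)
         \<and> (\<forall>i\<in>Iset I. \<forall>t\<ge>0. y i t \<ge> 0)
         \<and> (\<forall>j\<in>Jset I J. \<forall>t\<ge>0. z j t \<ge> 0)
         \<and> (\<forall>t\<ge>0. min (\<Sum>i\<in>Iset I. y i t) (\<Sum>j\<in>Jset I J. z j t) = 0)
         \<longrightarrow> (\<forall>t\<ge>0. (\<Sum>i\<in>Iset I. \<bar>y i t\<bar>) + (\<Sum>j\<in>Jset I J. \<bar>z j t\<bar>)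
                     \<le> m2 * (1 + t) powr m2 * supnorm (Iset I) w t)"
proof -
  have theta_zero: "\<forall>i\<in>Iset I. \<theta> i = 0"
    using cases by blast
  have rates: "(\<exists>m. \<forall>(i, j)\<in>E. \<mu> i j = m j) \<or> (\<exists>m. \<forall>(i, j)\<in>E. \<mu> i j = m i)"
    using cases by blast
  obtain K where K: "1 \<le> K"
    and linear_bound: "\<And>w y z \<psi> t. complementarity_system I J E \<mu> w y z \<psi> \<Longrightarrow> 0 \<le> t \<Longrightarrow>
      (\<Sum>i\<in>Iset I. \<bar>y i t\<bar>) + (\<Sum>j\<in>Jset I J. \<bar>z j t\<bar>) \<le> K * (1 + t) * supnorm (Iset I) w t"
    using complementarity_system_linear_bound[OF mu_pos rates] by blast
  show ?thesis
  proof (intro exI[of _ K] allI impI, goal_cases)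
    case (1 w y z \<psi> t)
    have system: "complementarity_system I J E \<mu> w y z \<psi>"
      by (intro complementarity_system.intro) (use 1(1) theta_zero in \<open>auto simp: min_def split: if_splits\<close>)
    have "(\<Sum>i\<in>Iset I. \<bar>y i t\<bar>) + (\<Sum>j\<in>Jset I J. \<bar>z j t\<bar>) \<le> K * (1 + t) * supnorm (Iset I) w t"
      using linear_bound[OF system 1(2)] .
    also have "\<dots> \<le> K * (1 + t) powr K * supnorm (Iset I) w t"
      using K 1(2) complementarity_system.supnorm_w_nonneg[OF system 1(2)]
      by (intro mult_right_mono mult_left_mono one_plus_le_powr) auto
    finally show ?case .
  qed
qed

end
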